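(* Let $\boldsymbol\beta=(\beta_1,\dots,\beta_N)\in(0,\infty)^N$ and $v\in\mathbb R$ with $\beta_i+v>0$ for all $i$. For any $u_0\in(-\min_i\beta_i,\infty)$ there exist an open disk $U\subset\mathbb C$ containing $u_0$ and constants $C,r>0$ such that for all $u\in U$ and all $\boldsymbol X=(\boldsymbol X_1,\boldsymbol X_2)\in\mathbb R^{2N}$, $$\big|H^{\boldsymbol\beta,u,v}(\boldsymbol X)\big|\le C\exp\Big(-r\Big(\sum_{j=1}^N|X_1(j)|+\sum_{j=1}^N|X_2(j)|\Big)\Big).$$
   Context: For $\theta\in\mathbb C$ let $f_\theta(x)=e^{-\theta x-e^{-x}}$. For $\boldsymbol X_i=(X_i(1),\dots,X_i(N))\in\mathbb R^N$, $i=1,2$, and $u\in\mathbb C$, $$H^{\boldsymbol\beta,u,v}(\boldsymbol X)=\Big(\sum_{j=1}^Ne^{-\sum_{i=j+1}^NX_2(i)-\sum_{i=1}^{j-1}X_1(i)}\Big)^{-(u+v)}\prod_{j=1}^Nf_{\beta_j+v}(X_1(j))f_{\beta_j+u}(X_2(j)),$$ where for $S>0$ and complex $w$, $S^{w}=e^{w\log S}$. *)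

theory Defs
  imports "HOL-Analysis.Analysis"
begin

definition gumbel_f :: "complex \<Rightarrow> real \<Rightarrow> complex" where
  "gumbel_f \<theta> x = exp (- \<theta> * complex_of_real x - complex_of_real (exp (- x)))"

definition pos_cpow :: "real \<Rightarrow> complex \<Rightarrow> complex" where
  "pos_cpow S w = exp (w * complex_of_real (ln S))"

text \<open>H^{beta,u,v}(X_1,X_2); vectors in R^N are functions on nat, indexed by 1..N.\<close>
definition H_fun :: "nat \<Rightarrow> (nat \<Rightarrow> real) \<Rightarrow> complex \<Rightarrow> real \<Rightarrow>
    (nat \<Rightarrow> real) \<Rightarrow> (nat \<Rightarrow> real) \<Rightarrow> complex" where
  "H_fun N \<beta> u v X1 X2 =
     pos_cpow (\<Sum>j=1..N. exp (- (\<Sum>i=j+1..N. X2 i) - (\<Sum>i=1..j-1. X1 i)))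
              (- (u + complex_of_real v))
     * (\<Prod>j=1..N. gumbel_f (complex_of_real (\<beta> j + v)) (X1 j)
                   * gumbel_f (complex_of_real (\<beta> j) + u) (X2 j))"

end

theory Submission
  imports Defs
begin

text \<open>
  Taking absolute values, \<open>\<bar>H\<bar> = exp (- s ln S + \<Sum>\<^sub>j \<phi>\<^bsub>\<beta>\<^sub>j+v\<^esub>(X\<^sub>1 j) + \<phi>\<^bsub>\<beta>\<^sub>j+Re u\<^esub>(X\<^sub>2 j))\<close>
  with \<open>s = Re u + v\<close> and \<open>\<phi>\<^sub>c(x) = - c x - e\<^sup>-\<^sup>x\<close>.  For \<open>m \<le> c \<le> D\<close> one has
  \<open>\<phi>\<^sub>c(x) \<le> (D + m)\<^sup>2 - m \<bar>x\<bar>\<close>, so it suffices to bound \<open>- s ln S\<close> by a constant plus a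
  linear form in \<open>X\<close> whose coefficients, absorbed into the \<open>\<phi>\<close>'s, keep all parameters
  in such a window \<open>[m, D]\<close>.  Since \<open>ln S\<close> is a log-sum-exp of the partial sums
  \<open>A\<^sub>k = \<Sum>\<^sub>i\<^sub><\<^sub>k X\<^sub>1 i + \<Sum>\<^sub>i\<^sub>>\<^sub>k X\<^sub>2 i\<close>, it lies between \<open>- min A\<close> and \<open>ln N - min A\<close>:
  for \<open>s \<ge> 0\<close> we use \<open>ln S \<ge> - A\<^sub>1\<close> and \<open>ln S \<ge> - A\<^sub>N\<close> (splitting \<open>s\<close> between the two),
  for \<open>s < 0\<close> the upper bound.  All parameters stay in a window uniformly for \<open>u\<close> near
  \<open>u\<^sub>0\<close>, because \<open>u\<^sub>0 + min \<beta> > 0\<close>.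
\<close>

definition gumbel_exponent :: "real \<Rightarrow> real \<Rightarrow> real" where
  "gumbel_exponent c x = - c * x - exp (- x)"

definition cut_sum :: "nat \<Rightarrow> (nat \<Rightarrow> real) \<Rightarrow> (nat \<Rightarrow> real) \<Rightarrow> nat \<Rightarrow> real" where
  "cut_sum N X1 X2 k = (\<Sum>i=1..k-1. X1 i) + (\<Sum>i=k+1..N. X2 i)"

definition cut_partition :: "nat \<Rightarrow> (nat \<Rightarrow> real) \<Rightarrow> (nat \<Rightarrow> real) \<Rightarrow> real" where
  "cut_partition N X1 X2 = (\<Sum>k=1..N. exp (- cut_sum N X1 X2 k))"

lemma mult_minus_exp_le_square:
  fixes K y :: real
  assumes "K \<ge> 0"
  shows "K * y - exp y \<le> K\<^sup>2"
proof (cases "y \<le> 0")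
  case True
  then have "K * y \<le> 0" using assms by (simp add: mult_nonneg_nonpos)
  then show ?thesis using exp_gt_zero[of y] zero_le_power2[of K] by linarith
next
  case False
  have "y/2 \<le> exp (y/2)" using exp_ge_add_one_self[of "y/2"] by linarith
  then have "(y/2)\<^sup>2 \<le> (exp (y/2))\<^sup>2" using False by (intro power_mono) auto
  also have "\<dots> = exp y" by (simp add: power2_eq_square flip: exp_add)
  finally have "(y/2)\<^sup>2 \<le> exp y" .
  moreover have "K * y \<le> K\<^sup>2 + (y/2)\<^sup>2"
    using zero_le_power2[of "K - y/2"] by (simp add: power2_eq_square algebra_simps)
  ultimately show ?thesis by linarith
qed

lemma gumbel_exponent_le_abs:
  assumes "0 < m" "m \<le> c" "c \<le> D"
  shows "gumbel_exponent c x \<le> (D + m)\<^sup>2 - m * \<bar>x\<bar>"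
proof (cases "x \<ge> 0")
  case True
  then have "m * x \<le> c * x" using assms by (intro mult_right_mono) auto
  then show ?thesis
    using True exp_gt_zero[of "- x"] zero_le_power2[of "D + m"]
    unfolding gumbel_exponent_def abs_of_nonneg[OF True] by linarith
next
  case False
  have "(c + m) * (- x) - exp (- x) \<le> (c + m)\<^sup>2"
    using assms by (intro mult_minus_exp_le_square) auto
  moreover have "(c + m)\<^sup>2 \<le> (D + m)\<^sup>2" using assms by (intro power_mono) auto
  ultimately show ?thesis using False by (simp add: gumbel_exponent_def algebra_simps)
qed

lemma sum_shifted_gumbel_exponent_le:
  fixes a b d1 d2 x y :: "'i \<Rightarrow> real"
  assumes "finite I" "0 < m"
    and "\<forall>j\<in>I. m \<le> a j - d1 j \<and> a j - d1 j \<le> D \<and> m \<le> b j - d2 j \<and> b j - d2 j \<le> D"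
  shows "(\<Sum>j\<in>I. d1 j * x j + d2 j * y j + gumbel_exponent (a j) (x j) + gumbel_exponent (b j) (y j))
           \<le> real (card I) * (2 * (D + m)\<^sup>2) - m * ((\<Sum>j\<in>I. \<bar>x j\<bar>) + (\<Sum>j\<in>I. \<bar>y j\<bar>))"
proof -
  have "d1 j * x j + d2 j * y j + gumbel_exponent (a j) (x j) + gumbel_exponent (b j) (y j)
          \<le> 2 * (D + m)\<^sup>2 - m * \<bar>x j\<bar> - m * \<bar>y j\<bar>" if "j \<in> I" for j
  proof -
    have "d1 j * x j + gumbel_exponent (a j) (x j) = gumbel_exponent (a j - d1 j) (x j)"
      and "d2 j * y j + gumbel_exponent (b j) (y j) = gumbel_exponent (b j - d2 j) (y j)"
      by (simp_all add: gumbel_exponent_def algebra_simps)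
    moreover have "gumbel_exponent (a j - d1 j) (x j) \<le> (D + m)\<^sup>2 - m * \<bar>x j\<bar>"
      and "gumbel_exponent (b j - d2 j) (y j) \<le> (D + m)\<^sup>2 - m * \<bar>y j\<bar>"
      using assms(2,3) that by (auto intro!: gumbel_exponent_le_abs)
    ultimately show ?thesis by linarith
  qed
  then have "(\<Sum>j\<in>I. d1 j * x j + d2 j * y j + gumbel_exponent (a j) (x j) + gumbel_exponent (b j) (y j))
               \<le> (\<Sum>j\<in>I. 2 * (D + m)\<^sup>2 - m * \<bar>x j\<bar> - m * \<bar>y j\<bar>)"
    by (rule sum_mono)
  also have "\<dots> = real (card I) * (2 * (D + m)\<^sup>2) - m * ((\<Sum>j\<in>I. \<bar>x j\<bar>) + (\<Sum>j\<in>I. \<bar>y j\<bar>))"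
    by (simp add: sum_subtractf sum_distrib_left sum.distrib algebra_simps)
  finally show ?thesis .
qed

lemma ln_sum_exp_ge:
  fixes A :: "'i \<Rightarrow> real"
  assumes "finite I" "k \<in> I"
  shows "- A k \<le> ln (\<Sum>i\<in>I. exp (- A i))"
proof -
  have "exp (- A k) \<le> (\<Sum>i\<in>I. exp (- A i))"
    using assms by (intro member_le_sum) auto
  then show ?thesis using assms by (subst ln_ge_iff) (auto intro: sum_pos2)
qed

lemma ln_sum_exp_le:
  fixes A :: "'i \<Rightarrow> real"
  assumes "finite I" "I \<noteq> {}" "\<And>i. i \<in> I \<Longrightarrow> a \<le> A i"
  shows "ln (\<Sum>i\<in>I. exp (- A i)) \<le> ln (real (card I)) - a"
proof -
  have "(\<Sum>i\<in>I. exp (- A i)) \<le> (\<Sum>i\<in>I. exp (- a))"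
    using assms(3) by (intro sum_mono) simp
  also have "\<dots> = real (card I) * exp (- a)" by simp
  finally have "ln (\<Sum>i\<in>I. exp (- A i)) \<le> ln (real (card I) * exp (- a))"
    using assms by (subst ln_le_cancel_iff) (auto intro: sum_pos simp: card_gt_0_iff)
  also have "\<dots> = ln (real (card I)) - a"
    using assms(1,2) by (simp add: ln_mult card_gt_0_iff)
  finally show ?thesis .
qed

lemma mult_cut_sum:
  assumes "k \<in> {1..N}"
  shows "c * cut_sum N X1 X2 k
           = (\<Sum>j=1..N. (if j < k then c else 0) * X1 j + (if k < j then c else 0) * X2 j)"
proof -
  have below: "{j \<in> {1..N}. j < k} = {1..k-1}" and above: "{j \<in> {1..N}. k < j} = {k+1..N}"
    using assms by auto
  have "(\<Sum>j=1..N. (if j < k then c else 0) * X1 j + (if k < j then c else 0) * X2 j)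
          = (\<Sum>j=1..N. (if j < k then c * X1 j else 0) + (if k < j then c * X2 j else 0))"
    by (intro sum.cong) auto
  also have "\<dots> = (\<Sum>j\<in>{j \<in> {1..N}. j < k}. c * X1 j) + (\<Sum>j\<in>{j \<in> {1..N}. k < j}. c * X2 j)"
    by (simp only: sum.distrib sum.inter_filter[OF finite_atLeastAtMost])
  finally show ?thesis unfolding below above by (simp add: cut_sum_def sum_distrib_left distrib_left)
qed

lemma norm_H_fun:
  "norm (H_fun N \<beta> u v X1 X2)
     = exp (- (Re u + v) * ln (cut_partition N X1 X2)
            + (\<Sum>j=1..N. gumbel_exponent (\<beta> j + v) (X1 j) + gumbel_exponent (\<beta> j + Re u) (X2 j)))"
proof -
  have "(\<Sum>j=1..N. exp (- (\<Sum>i=j+1..N. X2 i) - (\<Sum>i=1..j-1. X1 i))) = cut_partition N X1 X2"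
    by (simp add: cut_partition_def cut_sum_def algebra_simps)
  then show ?thesis
    unfolding H_fun_def pos_cpow_def gumbel_f_def gumbel_exponent_def
    by (simp add: norm_mult prod_norm[symmetric] norm_exp_eq_Re exp_sum exp_add
                  prod.distrib[symmetric] sum.distrib)
qed

lemma nonneg_mult_ln_cut_partition_bound:
  assumes "N \<ge> 1" "0 \<le> \<alpha>" "0 \<le> \<gamma>"
  shows "- (\<alpha> + \<gamma>) * ln (cut_partition N X1 X2)
           \<le> (\<Sum>j=1..N. (if j < N then \<gamma> else 0) * X1 j + (if 1 < j then \<alpha> else 0) * X2 j)"
proof -
  have first: "1 \<in> {1..N}" and last: "N \<in> {1..N}" using assms(1) by auto
  have ge: "- cut_sum N X1 X2 k \<le> ln (cut_partition N X1 X2)" if "k \<in> {1..N}" for k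
    unfolding cut_partition_def using that by (intro ln_sum_exp_ge) auto
  have "- \<alpha> * ln (cut_partition N X1 X2) \<le> \<alpha> * cut_sum N X1 X2 1"
    using mult_left_mono[OF ge[OF first] assms(2)] by simp
  moreover have "- \<gamma> * ln (cut_partition N X1 X2) \<le> \<gamma> * cut_sum N X1 X2 N"
    using mult_left_mono[OF ge[OF last] assms(3)] by simp
  moreover have "\<alpha> * cut_sum N X1 X2 1 + \<gamma> * cut_sum N X1 X2 N
      = (\<Sum>j=1..N. (if j < N then \<gamma> else 0) * X1 j + (if 1 < j then \<alpha> else 0) * X2 j)"
    unfolding mult_cut_sum[OF first] mult_cut_sum[OF last] sum.distrib[symmetric]
    by (intro sum.cong) auto
  ultimately show ?thesis by (simp add: algebra_simps)
qed

lemma nonpos_mult_ln_cut_partition_bound: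
  assumes "N \<ge> 1" "s \<le> 0"
  obtains k where "k \<in> {1..N}"
    and "- s * ln (cut_partition N X1 X2)
           \<le> - s * ln (real N)
              + (\<Sum>j=1..N. (if j < k then s else 0) * X1 j + (if k < j then s else 0) * X2 j)"
proof -
  let ?A = "cut_sum N X1 X2"
  have "Min (?A ` {1..N}) \<in> ?A ` {1..N}" using assms(1) by (intro Min_in) auto
  then obtain k where k: "k \<in> {1..N}" and k_min: "?A k = Min (?A ` {1..N})"
    by auto
  have "?A k \<le> ?A j" if "j \<in> {1..N}" for j
    using that unfolding k_min by simp
  then have "ln (cut_partition N X1 X2) \<le> ln (real N) - ?A k"
    unfolding cut_partition_def using ln_sum_exp_le[of "{1..N}" "?A k" ?A] assms(1) by simp
  then have "- s * ln (cut_partition N X1 X2) \<le> - s * (ln (real N) - ?A k)"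
    using assms(2) by (intro mult_left_mono) auto
  then have "- s * ln (cut_partition N X1 X2) \<le> - s * ln (real N) + s * ?A k"
    by (simp add: algebra_simps)
  then show ?thesis using that k unfolding mult_cut_sum[OF k] by blast
qed

text \<open>
  For \<open>s = w + v \<ge> 0\<close> the split \<open>s = \<alpha> + \<gamma>\<close> is chosen so that the shifted parameters
  \<open>\<beta>\<^sub>j + v - d\<^sub>1 j\<close>, \<open>\<beta>\<^sub>j + w - d\<^sub>2 j\<close> stay among \<open>\<beta>\<^sub>j, \<beta>\<^sub>j \<plusminus> v, \<beta>\<^sub>j \<plusminus> w\<close>.
\<close>
lemma ln_cut_partition_term_absorption:
  assumes "N \<ge> 1"
    and window: "\<forall>j\<in>{1..N}. m \<le> \<beta> j \<and> m \<le> \<beta> j + v \<and> m \<le> \<beta> j + w \<and> \<beta> j + \<bar>v\<bar> + \<bar>w\<bar> \<le> D"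
  obtains d1 d2 where
    "- (w + v) * ln (cut_partition N X1 X2)
       \<le> \<bar>w + v\<bar> * ln (real N) + (\<Sum>j=1..N. d1 j * X1 j + d2 j * X2 j)"
    and "\<forall>j\<in>{1..N}. m \<le> \<beta> j + v - d1 j \<and> \<beta> j + v - d1 j \<le> D
                     \<and> m \<le> \<beta> j + w - d2 j \<and> \<beta> j + w - d2 j \<le> D"
proof (cases "w + v \<ge> 0")
  case True
  define \<alpha> where "\<alpha> = max 0 (min w (w + v))"
  define \<gamma> where "\<gamma> = w + v - \<alpha>"
  have "0 \<le> \<alpha>" "0 \<le> \<gamma>" using True by (auto simp: \<alpha>_def \<gamma>_def)
  from nonneg_mult_ln_cut_partition_bound[OF assms(1) this, of X1 X2]
  have "- (w + v) * ln (cut_partition N X1 X2)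
          \<le> (\<Sum>j=1..N. (if j < N then \<gamma> else 0) * X1 j + (if 1 < j then \<alpha> else 0) * X2 j)"
    by (simp add: \<gamma>_def)
  moreover have "0 \<le> \<bar>w + v\<bar> * ln (real N)" using assms(1) by simp
  moreover have "\<forall>j\<in>{1..N}. m \<le> \<beta> j + v - (if j < N then \<gamma> else 0) \<and> \<beta> j + v - (if j < N then \<gamma> else 0) \<le> D
      \<and> m \<le> \<beta> j + w - (if 1 < j then \<alpha> else 0) \<and> \<beta> j + w - (if 1 < j then \<alpha> else 0) \<le> D"
    using window True by (auto simp: \<alpha>_def \<gamma>_def max_def min_def abs_if)
  ultimately show ?thesis
    using that[of "\<lambda>j. if j < N then \<gamma> else 0" "\<lambda>j. if 1 < j then \<alpha> else 0"] by linarith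
next
  case False
  then obtain k where "k \<in> {1..N}"
    and log_bound: "- (w + v) * ln (cut_partition N X1 X2)
           \<le> - (w + v) * ln (real N)
              + (\<Sum>j=1..N. (if j < k then w + v else 0) * X1 j + (if k < j then w + v else 0) * X2 j)"
    using nonpos_mult_ln_cut_partition_bound[OF assms(1), of "w + v"] by auto
  have "\<bar>w + v\<bar> = - (w + v)" using False by simp
  then have bound: "- (w + v) * ln (cut_partition N X1 X2)
           \<le> \<bar>w + v\<bar> * ln (real N)
              + (\<Sum>j=1..N. (if j < k then w + v else 0) * X1 j + (if k < j then w + v else 0) * X2 j)"
    using log_bound by (simp only:)
  have "\<forall>j\<in>{1..N}. m \<le> \<beta> j + v - (if j < k then w + v else 0) \<and> \<beta> j + v - (if j < k then w + v else 0) \<le> D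
      \<and> m \<le> \<beta> j + w - (if k < j then w + v else 0) \<and> \<beta> j + w - (if k < j then w + v else 0) \<le> D"
    using window False by (auto simp: abs_if split: if_split_asm)
  with bound show ?thesis by (rule that)
qed

lemma norm_H_fun_le:
  assumes "N \<ge> 1" "0 < m"
    and "\<forall>j\<in>{1..N}. m \<le> \<beta> j \<and> m \<le> \<beta> j + v \<and> m \<le> \<beta> j + Re u \<and> \<beta> j + \<bar>v\<bar> + \<bar>Re u\<bar> \<le> D"
  shows "norm (H_fun N \<beta> u v X1 X2)
           \<le> exp (\<bar>Re u + v\<bar> * ln (real N) + 2 * real N * (D + m)\<^sup>2)
              * exp (- m * ((\<Sum>j=1..N. \<bar>X1 j\<bar>) + (\<Sum>j=1..N. \<bar>X2 j\<bar>)))"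
proof -
  let ?lin = "\<lambda>d1 d2. \<Sum>j=1..N. d1 j * X1 j + d2 j * X2 j"
  let ?gum = "\<Sum>j=1..N. gumbel_exponent (\<beta> j + v) (X1 j) + gumbel_exponent (\<beta> j + Re u) (X2 j)"
  obtain d1 d2 where log_term:
      "- (Re u + v) * ln (cut_partition N X1 X2) \<le> \<bar>Re u + v\<bar> * ln (real N) + ?lin d1 d2"
    and shifted: "\<forall>j\<in>{1..N}. m \<le> \<beta> j + v - d1 j \<and> \<beta> j + v - d1 j \<le> D
                     \<and> m \<le> \<beta> j + Re u - d2 j \<and> \<beta> j + Re u - d2 j \<le> D"
    by (rule ln_cut_partition_term_absorption[OF assms(1,3)])
  have "?lin d1 d2 + ?gum
          = (\<Sum>j=1..N. d1 j * X1 j + d2 j * X2 j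
               + gumbel_exponent (\<beta> j + v) (X1 j) + gumbel_exponent (\<beta> j + Re u) (X2 j))"
    by (simp only: sum.distrib[symmetric] add.assoc)
  also have "\<dots> \<le> real N * (2 * (D + m)\<^sup>2) - m * ((\<Sum>j=1..N. \<bar>X1 j\<bar>) + (\<Sum>j=1..N. \<bar>X2 j\<bar>))"
    using sum_shifted_gumbel_exponent_le[OF finite_atLeastAtMost assms(2) shifted] by simp
  finally have "- (Re u + v) * ln (cut_partition N X1 X2) + ?gum
      \<le> (\<bar>Re u + v\<bar> * ln (real N) + 2 * real N * (D + m)\<^sup>2)
         + - m * ((\<Sum>j=1..N. \<bar>X1 j\<bar>) + (\<Sum>j=1..N. \<bar>X2 j\<bar>))"
    using log_term by linarith
  then show ?thesis unfolding norm_H_fun exp_add[symmetric] by simp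
qed

lemma norm_H_fun_le_strip:
  assumes "N \<ge> 1" "0 < m" "\<bar>Re u - u0\<bar> < \<rho>"
    and "\<forall>j\<in>{1..N}. m \<le> \<beta> j \<and> m \<le> \<beta> j + v \<and> m \<le> \<beta> j + u0 - \<rho> \<and> \<beta> j + \<bar>v\<bar> + \<bar>u0\<bar> + \<rho> \<le> D"
  shows "norm (H_fun N \<beta> u v X1 X2)
           \<le> exp ((\<bar>u0\<bar> + \<rho> + \<bar>v\<bar>) * ln (real N) + 2 * real N * (D + m)\<^sup>2)
              * exp (- m * ((\<Sum>j=1..N. \<bar>X1 j\<bar>) + (\<Sum>j=1..N. \<bar>X2 j\<bar>)))"
proof -
  have near: "u0 - \<rho> < Re u" "\<bar>Re u\<bar> \<le> \<bar>u0\<bar> + \<rho>" using assms(3) by arith+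
  have "\<forall>j\<in>{1..N}. m \<le> \<beta> j \<and> m \<le> \<beta> j + v \<and> m \<le> \<beta> j + Re u \<and> \<beta> j + \<bar>v\<bar> + \<bar>Re u\<bar> \<le> D"
  proof
    fix j assume "j \<in> {1..N}"
    with assms(4) have "m \<le> \<beta> j" "m \<le> \<beta> j + v" "m \<le> \<beta> j + u0 - \<rho>" "\<beta> j + \<bar>v\<bar> + \<bar>u0\<bar> + \<rho> \<le> D"
      by auto
    with near show "m \<le> \<beta> j \<and> m \<le> \<beta> j + v \<and> m \<le> \<beta> j + Re u \<and> \<beta> j + \<bar>v\<bar> + \<bar>Re u\<bar> \<le> D"
      by linarith
  qed
  from norm_H_fun_le[OF assms(1,2) this]
  have "norm (H_fun N \<beta> u v X1 X2)
          \<le> exp (\<bar>Re u + v\<bar> * ln (real N) + 2 * real N * (D + m)\<^sup>2)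
             * exp (- m * ((\<Sum>j=1..N. \<bar>X1 j\<bar>) + (\<Sum>j=1..N. \<bar>X2 j\<bar>)))" .
  moreover have "\<bar>Re u + v\<bar> * ln (real N) \<le> (\<bar>u0\<bar> + \<rho> + \<bar>v\<bar>) * ln (real N)"
    using near(2) assms(1) by (intro mult_right_mono) auto
  then have "exp (\<bar>Re u + v\<bar> * ln (real N) + 2 * real N * (D + m)\<^sup>2)
      \<le> exp ((\<bar>u0\<bar> + \<rho> + \<bar>v\<bar>) * ln (real N) + 2 * real N * (D + m)\<^sup>2)"
    by simp
  ultimately show ?thesis by (meson order.trans mult_right_mono exp_ge_zero)
qed

lemma abs_Re_minus_less_of_mem_ball:
  assumes "u \<in> ball (complex_of_real x) r"
  shows "\<bar>Re u - x\<bar> < r"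
  using assms abs_Re_le_cmod[of "u - complex_of_real x"] by (simp add: dist_norm norm_minus_commute)

lemma parameter_window_exists:
  fixes \<beta> :: "nat \<Rightarrow> real"
  assumes "N \<ge> 1" "\<forall>i\<in>{1..N}. \<beta> i > 0" "\<forall>i\<in>{1..N}. \<beta> i + v > 0"
    and "u0 > - Min (\<beta> ` {1..N})"
  obtains \<rho> m D where "0 < \<rho>" "0 < m"
    and "\<forall>j\<in>{1..N}. m \<le> \<beta> j \<and> m \<le> \<beta> j + v \<and> m \<le> \<beta> j + u0 - \<rho> \<and> \<beta> j + \<bar>v\<bar> + \<bar>u0\<bar> + \<rho> \<le> D"
proof -
  define \<rho> where "\<rho> = (u0 + Min (\<beta> ` {1..N})) / 2"
  define m where "m = min \<rho> (Min ((\<lambda>j. min (\<beta> j) (\<beta> j + v)) ` {1..N}))"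
  define D where "D = Max (\<beta> ` {1..N}) + \<bar>v\<bar> + \<bar>u0\<bar> + \<rho>"
  have "0 < \<rho>" using assms(4) by (simp add: \<rho>_def)
  moreover have "0 < m" using \<open>0 < \<rho>\<close> assms(1-3) by (simp add: m_def Min_gr_iff)
  moreover have "\<forall>j\<in>{1..N}. m \<le> \<beta> j \<and> m \<le> \<beta> j + v \<and> m \<le> \<beta> j + u0 - \<rho> \<and> \<beta> j + \<bar>v\<bar> + \<bar>u0\<bar> + \<rho> \<le> D"
  proof
    fix j assume j: "j \<in> {1..N}"
    then have "m \<le> min (\<beta> j) (\<beta> j + v)" unfolding m_def by (intro min.coboundedI2 Min_le) auto
    moreover have "Min (\<beta> ` {1..N}) \<le> \<beta> j" "\<beta> j \<le> Max (\<beta> ` {1..N})" using j by auto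
    moreover have "m \<le> \<rho>" by (simp add: m_def)
    moreover have "u0 + Min (\<beta> ` {1..N}) = 2 * \<rho>" by (simp add: \<rho>_def)
    ultimately show "m \<le> \<beta> j \<and> m \<le> \<beta> j + v \<and> m \<le> \<beta> j + u0 - \<rho> \<and> \<beta> j + \<bar>v\<bar> + \<bar>u0\<bar> + \<rho> \<le> D"
      unfolding D_def by auto
  qed
  ultimately show ?thesis by (rule that)
qed

theorem lemma3p22:
  fixes N :: nat and \<beta> :: "nat \<Rightarrow> real" and v u0 :: real
  assumes "N \<ge> 1"
    and "\<forall>i\<in>{1..N}. \<beta> i > 0"
    and "\<forall>i\<in>{1..N}. \<beta> i + v > 0"
    and "u0 > - Min (\<beta> ` {1..N})"
  shows "\<exists>c \<rho> C r. \<rho> > 0 \<and> complex_of_real u0 \<in> ball c \<rho> \<and> C > 0 \<and> r > 0 \<and>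
          (\<forall>u\<in>ball c \<rho>. \<forall>X1 X2 :: nat \<Rightarrow> real.
             norm (H_fun N \<beta> u v X1 X2)
               \<le> C * exp (- r * ((\<Sum>j=1..N. \<bar>X1 j\<bar>) + (\<Sum>j=1..N. \<bar>X2 j\<bar>))))"
proof -
  obtain \<rho> m D where "0 < \<rho>" "0 < m"
    and window: "\<forall>j\<in>{1..N}. m \<le> \<beta> j \<and> m \<le> \<beta> j + v \<and> m \<le> \<beta> j + u0 - \<rho>
                              \<and> \<beta> j + \<bar>v\<bar> + \<bar>u0\<bar> + \<rho> \<le> D"
    using parameter_window_exists[OF assms] by blast
  define C where "C = exp ((\<bar>u0\<bar> + \<rho> + \<bar>v\<bar>) * ln (real N) + 2 * real N * (D + m)\<^sup>2)"
  have bound: "norm (H_fun N \<beta> u v X1 X2) \<le> C * exp (- m * ((\<Sum>j=1..N. \<bar>X1 j\<bar>) + (\<Sum>j=1..N. \<bar>X2 j\<bar>)))"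
    if "u \<in> ball (complex_of_real u0) \<rho>" for u X1 X2
    unfolding C_def
    by (rule norm_H_fun_le_strip[OF assms(1) \<open>0 < m\<close> abs_Re_minus_less_of_mem_ball[OF that] window])
  show ?thesis
    by (rule exI[of _ "complex_of_real u0"], rule exI[of _ \<rho>], rule exI[of _ C], rule exI[of _ m])
       (use \<open>0 < \<rho>\<close> \<open>0 < m\<close> bound in \<open>auto simp: C_def\<close>)
qed

end
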